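(* (i) If a variety $\mathcal V$ is $3$-modular, then $\mathcal V$ is $(m,m)$-modular for every $m\ge3$. (ii) If a variety $\mathcal V$ is $4$-modular, then $\mathcal V$ is $(2^q-1,2^q)$-modular for every $q\ge2$.
   Context: $\circ$ denotes relational composition, juxtaposition denotes intersection. For relations $X,Y$ and $m\ge1$, $X\circ_m Y$ denotes $X\circ Y\circ X\circ\cdots$ with $m$ factors. For $m\ge3$, a variety $\mathcal V$ is $(m,k)$-modular if every algebra in $\mathcal V$ satisfies $\alpha(\beta\circ_m\alpha\gamma)\subseteq\alpha\beta\circ_k\alpha\gamma$ for all congruences $\alpha,\beta,\gamma$; $k$-modular means $(3,k)$-modular. *)

theory Defs
  imports Main
begin

datatype ('f, 'v) trm = Var 'v | Fun 'f "('f, 'v) trm list"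

text \<open>An algebra of signature (ar :: 'f => nat): a carrier and, for each operation
symbol f, an operation acting on lists (only lists of length ar f are relevant).\<close>
record ('f, 'a) alg =
  carr :: "'a set"
  ops :: "'f \<Rightarrow> 'a list \<Rightarrow> 'a"

definition is_alg :: "('f \<Rightarrow> nat) \<Rightarrow> ('f, 'a) alg \<Rightarrow> bool" where
  "is_alg ar A \<longleftrightarrow> carr A \<noteq> {} \<and>
     (\<forall>f xs. length xs = ar f \<and> set xs \<subseteq> carr A \<longrightarrow> ops A f xs \<in> carr A)"

fun wf_trm :: "('f \<Rightarrow> nat) \<Rightarrow> ('f, 'v) trm \<Rightarrow> bool" where
  "wf_trm ar (Var v) = True"
| "wf_trm ar (Fun f ts) = (length ts = ar f \<and> (\<forall>t\<in>set ts. wf_trm ar t))"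

fun eval :: "('f, 'a) alg \<Rightarrow> ('v \<Rightarrow> 'a) \<Rightarrow> ('f, 'v) trm \<Rightarrow> 'a" where
  "eval A \<rho> (Var v) = \<rho> v"
| "eval A \<rho> (Fun f ts) = ops A f (map (eval A \<rho>) ts)"

definition identities :: "('f \<Rightarrow> nat) \<Rightarrow> (('f, 'v) trm \<times> ('f, 'v) trm) set \<Rightarrow> bool" where
  "identities ar E \<longleftrightarrow> (\<forall>(s, t)\<in>E. wf_trm ar s \<and> wf_trm ar t)"

definition model :: "('f \<Rightarrow> nat) \<Rightarrow> (('f, 'v) trm \<times> ('f, 'v) trm) set \<Rightarrow> ('f, 'a) alg \<Rightarrow> bool" where
  "model ar E A \<longleftrightarrow> is_alg ar A \<and>
     (\<forall>(s, t)\<in>E. \<forall>\<rho>. (\<forall>v. \<rho> v \<in> carr A) \<longrightarrow> eval A \<rho> s = eval A \<rho> t)"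

definition congruence :: "('f \<Rightarrow> nat) \<Rightarrow> ('f, 'a) alg \<Rightarrow> 'a rel \<Rightarrow> bool" where
  "congruence ar A \<theta> \<longleftrightarrow> equiv (carr A) \<theta> \<and>
     (\<forall>f xs ys. length xs = ar f \<and> length ys = ar f \<and> list_all2 (\<lambda>x y. (x, y) \<in> \<theta>) xs ys
        \<longrightarrow> (ops A f xs, ops A f ys) \<in> \<theta>)"

fun alt_comp :: "'a rel \<Rightarrow> 'a rel \<Rightarrow> nat \<Rightarrow> 'a rel" where
  "alt_comp X Y 0 = Id"
| "alt_comp X Y (Suc 0) = X"
| "alt_comp X Y (Suc (Suc n)) = X O alt_comp Y X (Suc n)"

definition mk_modular_alg :: "('f \<Rightarrow> nat) \<Rightarrow> ('f, 'a) alg \<Rightarrow> nat \<Rightarrow> nat \<Rightarrow> bool" where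
  "mk_modular_alg ar A m k \<longleftrightarrow>
     (\<forall>\<alpha> \<beta> \<gamma>. congruence ar A \<alpha> \<and> congruence ar A \<beta> \<and> congruence ar A \<gamma> \<longrightarrow>
        \<alpha> \<inter> alt_comp \<beta> (\<alpha> \<inter> \<gamma>) m \<subseteq> alt_comp (\<alpha> \<inter> \<beta>) (\<alpha> \<inter> \<gamma>) k)"

end

theory Submission
  imports Defs
begin

(*
  Both parts go through Day terms.  The hypothesis is applied to the free algebra of the
  variety (its carrier is a set of terms), with the congruences alpha, beta, gamma that
  identify the free generators x, y, z, w according to the patterns (x,y,y,x), (x,x,w,w)
  and (x,y,y,w).  Since x beta y (alpha gamma) z beta w and x alpha w, (3,n)-modularity
  yields a chain x = m_0, ..., m_n = w, and these terms are Day terms.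

  Day terms in turn give the inclusions in every algebra of the variety, via the elements
  m_i(x,c,d,y).  With Day terms m_0, ..., m_3 the inclusion for n factors follows by strong
  induction on n: for odd n >= 5, split the chain at an odd position near its middle;
  m_1(x,c,c,y) = m_2(x,c,c,y) is then linked to x and to y by two shorter chains.
  With Day terms m_0, ..., m_4, a chain with 2n + 1 factors is x ... c (alpha gamma) d ... y
  with n factors on either side.  Then x, m_1, m_2, m_3, y are linked alternately by
  alpha-related chains with n factors (handled by induction) and by alpha gamma steps; for
  the link from m_2 to m_3 both are compared with m_2(a,a,w,w) = m_3(a,a,w,w), where a and w
  are midpoints of the chains from x to c and from d to y.
*)

lemma alt_comp_Suc: "alt_comp X Y (Suc k) = X O alt_comp Y X k"
  by (cases k) auto

lemma alt_comp_add:
  "alt_comp X Y (a + b) = alt_comp X Y a O (if even a then alt_comp X Y b else alt_comp Y X b)"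
  by (induction a arbitrary: X Y) (simp_all add: alt_comp_Suc O_assoc)

lemma alt_comp_snoc: "alt_comp X Y (Suc k) = alt_comp X Y k O (if even k then X else Y)"
  using alt_comp_add[of X Y k 1] by simp

lemma alt_comp_converse:
  assumes "sym X" "sym Y"
  shows "(alt_comp X Y k)\<inverse> = (if even k then alt_comp Y X k else alt_comp X Y k)"
  using assms
proof (induction k arbitrary: X Y)
  case (Suc k)
  have "(alt_comp X Y (Suc k))\<inverse> = (alt_comp Y X k)\<inverse> O X"
    using Suc.prems by (simp add: alt_comp_Suc converse_relcomp sym_conv_converse_eq)
  also have "\<dots> = (if even (Suc k) then alt_comp Y X (Suc k) else alt_comp X Y (Suc k))"
    using Suc by (simp add: alt_comp_snoc)
  finally show ?case .
qed simp

lemma alt_comp_iff_chain: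
  "(x, y) \<in> alt_comp X Y n \<longleftrightarrow>
     (\<exists>d. d 0 = x \<and> d n = y \<and> (\<forall>i<n. (d i, d (Suc i)) \<in> (if even i then X else Y)))"
proof (induction n arbitrary: X Y x)
  case 0
  show ?case by auto
next
  case (Suc n)
  show ?case
  proof
    assume "(x, y) \<in> alt_comp X Y (Suc n)"
    then obtain z d where "(x, z) \<in> X" "d 0 = z" "d n = y"
      and d: "\<forall>i<n. (d i, d (Suc i)) \<in> (if even i then Y else X)"
      using Suc.IH by (auto simp: alt_comp_Suc)
    then show "\<exists>d. d 0 = x \<and> d (Suc n) = y \<and> (\<forall>i<Suc n. (d i, d (Suc i)) \<in> (if even i then X else Y))"
      by (intro exI[of _ "\<lambda>i. case i of 0 \<Rightarrow> x | Suc j \<Rightarrow> d j"]) (auto simp: less_Suc_eq_0_disj)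
  next
    assume "\<exists>d. d 0 = x \<and> d (Suc n) = y \<and> (\<forall>i<Suc n. (d i, d (Suc i)) \<in> (if even i then X else Y))"
    then obtain d where "d 0 = x" "d (Suc n) = y" "\<forall>i<Suc n. (d i, d (Suc i)) \<in> (if even i then X else Y)"
      by blast
    moreover from this have "(d 1, y) \<in> alt_comp Y X n"
      unfolding Suc.IH by (intro exI[of _ "d \<circ> Suc"]) auto
    ultimately show "(x, y) \<in> alt_comp X Y (Suc n)"
      by (force simp: alt_comp_Suc)
  qed
qed

lemma alt_comp_merge:
  assumes "Z = (if even a then X else Y)" and "Z O Z = Z"
  shows "alt_comp X Y (Suc a) O (if even a then alt_comp X Y (Suc b) else alt_comp Y X (Suc b))
           = alt_comp X Y (a + Suc b)"
proof -
  let ?T = "if even a then alt_comp Y X b else alt_comp X Y b"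
  have left: "alt_comp X Y (Suc a) = alt_comp X Y a O Z"
    using assms(1) by (simp add: alt_comp_snoc)
  have right: "(if even a then alt_comp X Y (Suc b) else alt_comp Y X (Suc b)) = Z O ?T"
    using assms(1) by (simp add: alt_comp_Suc)
  have whole: "alt_comp X Y (a + Suc b) = alt_comp X Y a O Z O ?T"
    using assms(1) by (subst alt_comp_add) (simp add: alt_comp_Suc)
  have ZZ: "Z O (Z O ?T) = Z O ?T"
    using assms(2) by (simp add: O_assoc[symmetric])
  show ?thesis
    unfolding left right whole by (simp only: O_assoc ZZ)
qed

lemma equiv_relcomp_self: "equiv C r \<Longrightarrow> r O r = r"
  by (metis equiv_comp_eq equiv_def sym_conv_converse_eq)

lemma equiv_chain:
  assumes "equiv C r" "d 0 \<in> C" "\<forall>i<n. (d i, d (Suc i)) \<in> r" "i \<le> n"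
  shows "(d i, d 0) \<in> r"
  using assms(4)
proof (induction i)
  case 0
  then show ?case
    using assms(1,2) by (simp add: equiv_def refl_on_def)
next
  case (Suc i)
  then have "(d i, d (Suc i)) \<in> r" "(d i, d 0) \<in> r"
    using assms(3) by simp_all
  then show ?case
    using assms(1) unfolding equiv_def sym_def trans_def by blast
qed

lemma alt_comp_subset: "X \<subseteq> C \<times> C \<Longrightarrow> Y \<subseteq> C \<times> C \<Longrightarrow> alt_comp X Y (Suc k) \<subseteq> C \<times> C"
proof (induction k arbitrary: X Y)
  case (Suc k)
  then show ?case
    unfolding alt_comp_Suc[of X Y "Suc k"] by blast
qed simp

lemma alt_comp_le_Suc:
  assumes "equiv C X" "equiv C Y"
  shows "alt_comp X Y (Suc k) \<subseteq> alt_comp X Y (Suc (Suc k))"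
proof -
  have "alt_comp X Y (Suc k) \<subseteq> C \<times> C"
    using assms by (intro alt_comp_subset) (auto simp: equiv_def)
  moreover have "refl_on C (if even (Suc k) then X else Y)"
    using assms by (simp add: equiv_def)
  ultimately show ?thesis
    unfolding alt_comp_snoc[of X Y "Suc k"] refl_on_def by blast
qed

lemma alt_comp_mono:
  assumes "equiv C X" "equiv C Y" "1 \<le> k" "k \<le> l"
  shows "alt_comp X Y k \<subseteq> alt_comp X Y l"
proof -
  have "alt_comp X Y (Suc (k - 1)) \<subseteq> alt_comp X Y (Suc (l - 1))"
    by (rule lift_Suc_mono_le[of "\<lambda>i. alt_comp X Y (Suc i)", OF alt_comp_le_Suc[OF assms(1,2)]])
      (use assms(4) in simp)
  then show ?thesis
    using assms by simp
qed

lemma alt_comp_swap_le_Suc: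
  assumes "equiv C X" "equiv C Y"
  shows "alt_comp Y X (Suc k) \<subseteq> alt_comp X Y (Suc (Suc k))"
proof -
  have "alt_comp Y X (Suc k) \<subseteq> C \<times> C"
    using assms by (intro alt_comp_subset) (auto simp: equiv_def)
  moreover have "refl_on C X"
    using assms(1) by (simp add: equiv_def)
  ultimately show ?thesis
    unfolding alt_comp_Suc[of X Y "Suc k"] refl_on_def by blast
qed

lemma odd_split_balanced:
  fixes n :: nat
  assumes "odd n" "5 \<le> n"
  obtains p r where "odd p" "odd r" "3 \<le> p" "r \<le> p" "p \<le> r + 2" "n = p + Suc r"
proof -
  obtain j where j: "n = 2 * j + 1"
    using assms(1) oddE by blast
  show thesis
  proof (cases "odd j")
    case True
    then have "3 \<le> j"
      using j assms(2) by presburger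
    with True j show thesis
      by (intro that[of j j]) auto
  next
    case False
    with j assms(2) show thesis
      by (intro that[of "j + 1" "j - 1"]) auto
  qed
qed

lemma congruence_equiv: "congruence ar A \<theta> \<Longrightarrow> equiv (carr A) \<theta>"
  by (simp add: congruence_def)

lemma congruence_refl: "congruence ar A \<theta> \<Longrightarrow> x \<in> carr A \<Longrightarrow> (x, x) \<in> \<theta>"
  by (simp add: congruence_def equiv_def refl_on_def)

lemma congruence_sym: "congruence ar A \<theta> \<Longrightarrow> (x, y) \<in> \<theta> \<Longrightarrow> (y, x) \<in> \<theta>"
  by (meson congruence_equiv equiv_def symD)

lemma congruence_trans: "congruence ar A \<theta> \<Longrightarrow> (x, y) \<in> \<theta> \<Longrightarrow> (y, z) \<in> \<theta> \<Longrightarrow> (x, z) \<in> \<theta>"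
  by (meson congruence_equiv equiv_def transD)

lemma congruence_carr: "congruence ar A \<theta> \<Longrightarrow> (x, y) \<in> \<theta> \<Longrightarrow> x \<in> carr A \<and> y \<in> carr A"
  by (auto simp: congruence_def equiv_def)

lemma congruence_Int:
  assumes "congruence ar A X" and "congruence ar A Y"
  shows "congruence ar A (X \<inter> Y)"
proof -
  have "equiv (carr A) (X \<inter> Y)"
    using assms unfolding congruence_def equiv_def refl_on_def sym_def trans_def by blast
  moreover have "(ops A f xs, ops A f ys) \<in> X \<inter> Y"
    if "length xs = ar f" "length ys = ar f" "list_all2 (\<lambda>x y. (x, y) \<in> X \<inter> Y) xs ys" for f xs ys
    using assms that list_all2_mono[OF that(3)] unfolding congruence_def by (metis IntD1 IntD2 IntI)
  ultimately show ?thesis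
    unfolding congruence_def by blast
qed

definition preserves :: "('f, 'a) alg \<Rightarrow> 'a rel \<Rightarrow> ('f, 'v) trm \<Rightarrow> bool" where
  "preserves A R t \<longleftrightarrow> (\<forall>\<rho> \<rho>'. (\<forall>v. (\<rho> v, \<rho>' v) \<in> R) \<longrightarrow> (eval A \<rho> t, eval A \<rho>' t) \<in> R)"

lemma congruence_preserves:
  fixes A :: "('f, 'a) alg" and t :: "('f, 'v) trm"
  assumes "congruence ar A \<theta>" and "wf_trm ar t"
  shows "preserves A \<theta> t"
  unfolding preserves_def
proof (intro allI impI)
  fix \<rho> \<rho>' :: "'v \<Rightarrow> 'a" assume \<rho>: "\<forall>v. (\<rho> v, \<rho>' v) \<in> \<theta>"
  from assms(2) show "(eval A \<rho> t, eval A \<rho>' t) \<in> \<theta>"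
  proof (induction t)
    case (Fun f ts)
    then have "list_all2 (\<lambda>x y. (x, y) \<in> \<theta>) (map (eval A \<rho>) ts) (map (eval A \<rho>') ts)"
      by (auto simp: list_all2_conv_all_nth)
    with Fun.prems assms(1) show ?case
      unfolding congruence_def by simp
  qed (use \<rho> in simp)
qed

lemma preserves_relcomp:
  fixes A :: "('f, 'a) alg" and t :: "('f, 'v) trm"
  assumes "preserves A R t" and "preserves A S t"
  shows "preserves A (R O S) t"
  unfolding preserves_def
proof (intro allI impI)
  fix \<rho> \<rho>' :: "'v \<Rightarrow> 'a" assume "\<forall>v. (\<rho> v, \<rho>' v) \<in> R O S"
  then obtain \<mu> where "\<forall>v. (\<rho> v, \<mu> v) \<in> R" and "\<forall>v. (\<mu> v, \<rho>' v) \<in> S"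
    by (auto simp: relcomp_unfold) metis
  with assms show "(eval A \<rho> t, eval A \<rho>' t) \<in> R O S"
    unfolding preserves_def by blast
qed

lemma congruence_preserves_alt_comp:
  assumes "congruence ar A X" and "congruence ar A Y" and "wf_trm ar t"
  shows "preserves A (alt_comp X Y (Suc k)) t"
  using assms(1,2)
proof (induction k arbitrary: X Y)
  case (Suc k)
  then show ?case
    unfolding alt_comp_Suc[of X Y "Suc k"]
    using preserves_relcomp congruence_preserves assms(3) by blast
qed (simp add: congruence_preserves assms(3))

section \<open>Day terms\<close>

text \<open>Variables beyond 3 are also sent to \<open>d\<close>, so \<open>env4 a b c d\<close> is an assignment into any
  set containing \<open>a, b, c, d\<close>.\<close>

definition env4 :: "'a \<Rightarrow> 'a \<Rightarrow> 'a \<Rightarrow> 'a \<Rightarrow> nat \<Rightarrow> 'a" where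
  "env4 a b c d v = (if v = 0 then a else if v = 1 then b else if v = 2 then c else d)"

lemma comp_env4: "f \<circ> env4 i j k l = env4 (f i) (f j) (f k) (f l)"
  by (auto simp: env4_def)

lemma preserves_env4:
  assumes "preserves A R t" "(a, a') \<in> R" "(b, b') \<in> R" "(c, c') \<in> R" "(d, d') \<in> R"
  shows "(eval A (env4 a b c d) t, eval A (env4 a' b' c' d') t) \<in> R"
  using assms unfolding preserves_def env4_def by auto

lemma congruence_eval_env4:
  assumes "congruence ar A \<theta>" "wf_trm ar t" "(a, a') \<in> \<theta>" "(b, b') \<in> \<theta>" "(c, c') \<in> \<theta>" "(d, d') \<in> \<theta>"
  shows "(eval A (env4 a b c d) t, eval A (env4 a' b' c' d') t) \<in> \<theta>"
  using preserves_env4[OF congruence_preserves[OF assms(1,2)] assms(3-)] .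

definition day_terms :: "('f \<Rightarrow> nat) \<Rightarrow> ('f, 'a) alg \<Rightarrow> nat \<Rightarrow> (nat \<Rightarrow> ('f, nat) trm) \<Rightarrow> bool" where
  "day_terms ar A n m \<longleftrightarrow> (\<forall>i\<le>n. wf_trm ar (m i)) \<and>
     (\<forall>a\<in>carr A. \<forall>b\<in>carr A. \<forall>c\<in>carr A. \<forall>d\<in>carr A.
        eval A (env4 a b c d) (m 0) = a \<and> eval A (env4 a b c d) (m n) = d \<and>
        (\<forall>i\<le>n. eval A (env4 a b b a) (m i) = a) \<and>
        (\<forall>i<n. if even i then eval A (env4 a a c c) (m i) = eval A (env4 a a c c) (m (Suc i))
               else eval A (env4 a b b d) (m i) = eval A (env4 a b b d) (m (Suc i))))"

lemma day_terms_wf: "day_terms ar A n m \<Longrightarrow> i \<le> n \<Longrightarrow> wf_trm ar (m i)"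
  by (simp add: day_terms_def)

lemma day_terms_eval:
  assumes "day_terms ar A n m" "a \<in> carr A" "b \<in> carr A" "c \<in> carr A" "d \<in> carr A"
  shows "eval A (env4 a b c d) (m 0) = a"
    and "eval A (env4 a b c d) (m n) = d"
    and "i \<le> n \<Longrightarrow> eval A (env4 a b b a) (m i) = a"
    and "i < n \<Longrightarrow> even i \<Longrightarrow> eval A (env4 a a c c) (m i) = eval A (env4 a a c c) (m (Suc i))"
    and "i < n \<Longrightarrow> odd i \<Longrightarrow> eval A (env4 a b b d) (m i) = eval A (env4 a b b d) (m (Suc i))"
  using assms unfolding day_terms_def by (auto split: if_splits)

lemma day_terms_even_link:
  assumes day: "day_terms ar A N m" and i: "i < N" "even i"
    and R: "preserves A R (m i)" "preserves A R (m (Suc i))"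
    and "(x, a) \<in> R" "(c, a) \<in> R" "(d, w) \<in> R" "(y, w) \<in> R" "a \<in> carr A" "w \<in> carr A"
  shows "(eval A (env4 x c d y) (m i), eval A (env4 x c d y) (m (Suc i))) \<in> R O R\<inverse>"
proof -
  have "(eval A (env4 x c d y) (m i), eval A (env4 a a w w) (m i)) \<in> R"
    and "(eval A (env4 x c d y) (m (Suc i)), eval A (env4 a a w w) (m (Suc i))) \<in> R"
    using assms by (auto intro: preserves_env4)
  moreover have "eval A (env4 a a w w) (m i) = eval A (env4 a a w w) (m (Suc i))"
    using day_terms_eval(4)[OF day assms(10,10,11,11) i] .
  ultimately show ?thesis
    by auto
qed

section \<open>Congruence inclusions from Day terms\<close>

locale three_congruences =
  fixes ar :: "'f \<Rightarrow> nat" and A :: "('f, 'a) alg" and \<alpha> \<beta> \<gamma> :: "'a rel"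
  assumes cong_\<alpha>: "congruence ar A \<alpha>" and cong_\<beta>: "congruence ar A \<beta>" and cong_\<gamma>: "congruence ar A \<gamma>"
begin

abbreviation \<beta>_chain :: "nat \<Rightarrow> 'a rel" where
  "\<beta>_chain n \<equiv> alt_comp \<beta> (\<alpha> \<inter> \<gamma>) n"

abbreviation \<alpha>\<beta>_chain :: "nat \<Rightarrow> 'a rel" where
  "\<alpha>\<beta>_chain n \<equiv> alt_comp (\<alpha> \<inter> \<beta>) (\<alpha> \<inter> \<gamma>) n"

lemma cong_\<alpha>\<beta>: "congruence ar A (\<alpha> \<inter> \<beta>)"
  using congruence_Int[OF cong_\<alpha> cong_\<beta>] .

lemma cong_\<alpha>\<gamma>: "congruence ar A (\<alpha> \<inter> \<gamma>)"
  using congruence_Int[OF cong_\<alpha> cong_\<gamma>] .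

lemma \<beta>_chain_carr:
  assumes "1 \<le> k" "(x, y) \<in> \<beta>_chain k"
  shows "x \<in> carr A" "y \<in> carr A"
proof -
  have "\<beta>_chain (Suc (k - 1)) \<subseteq> carr A \<times> carr A"
    using cong_\<beta> cong_\<alpha>\<gamma> by (intro alt_comp_subset) (auto simp: congruence_def equiv_def)
  then show "x \<in> carr A" "y \<in> carr A"
    using assms by auto
qed

lemma \<beta>_chain_converse: "odd k \<Longrightarrow> (\<beta>_chain k)\<inverse> = \<beta>_chain k"
  using alt_comp_converse[of \<beta> "\<alpha> \<inter> \<gamma>" k] cong_\<beta> cong_\<alpha>\<gamma>
  by (simp add: congruence_def equiv_def)

lemma \<alpha>\<gamma>_\<beta>_chain_converse: "even k \<Longrightarrow> (alt_comp (\<alpha> \<inter> \<gamma>) \<beta> k)\<inverse> = \<beta>_chain k"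
  using alt_comp_converse[of "\<alpha> \<inter> \<gamma>" \<beta> k] cong_\<beta> cong_\<alpha>\<gamma>
  by (simp add: congruence_def equiv_def)

lemma \<beta>_chain_mono: "1 \<le> k \<Longrightarrow> k \<le> l \<Longrightarrow> \<beta>_chain k \<subseteq> \<beta>_chain l"
  using alt_comp_mono congruence_equiv[OF cong_\<beta>] congruence_equiv[OF cong_\<alpha>\<gamma>] by blast

lemma \<beta>_le_\<beta>_chain: "1 \<le> k \<Longrightarrow> \<beta> \<subseteq> \<beta>_chain k"
  using \<beta>_chain_mono[of 1 k] by simp

lemma \<alpha>\<gamma>_le_\<beta>_chain: "2 \<le> k \<Longrightarrow> \<alpha> \<inter> \<gamma> \<subseteq> \<beta>_chain k"
  using alt_comp_swap_le_Suc[OF congruence_equiv[OF cong_\<beta>] congruence_equiv[OF cong_\<alpha>\<gamma>], of 0]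
    \<beta>_chain_mono[of 2 k] by (simp add: numeral_2_eq_2)

lemma preserves_\<beta>_chain: "1 \<le> k \<Longrightarrow> wf_trm ar t \<Longrightarrow> preserves A (\<beta>_chain k) t"
  using congruence_preserves_alt_comp[OF cong_\<beta> cong_\<alpha>\<gamma>, of t "k - 1"] by simp

lemma day_term_\<alpha>:
  assumes "day_terms ar A n m" "i \<le> n" "(x, y) \<in> \<alpha>" "(c, d) \<in> \<alpha>"
  shows "(eval A (env4 x c d y) (m i), x) \<in> \<alpha>"
proof -
  have "x \<in> carr A" "c \<in> carr A"
    using assms(3,4) congruence_carr[OF cong_\<alpha>] by blast+
  moreover have "(eval A (env4 x c d y) (m i), eval A (env4 x c c x) (m i)) \<in> \<alpha>"
    using assms calculation
    by (intro preserves_env4 congruence_preserves[OF cong_\<alpha>] day_terms_wf)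
       (auto intro: congruence_refl[OF cong_\<alpha>] congruence_sym[OF cong_\<alpha>])
  ultimately show ?thesis
    using day_terms_eval(3)[OF assms(1)] assms(2) by simp
qed

lemma day_terms_\<alpha>_link:
  assumes day: "day_terms ar A N m" and i: "i < N" and xy: "(x, y) \<in> \<alpha>" and cd: "(c, d) \<in> \<alpha>"
  shows "(eval A (env4 x c d y) (m i), eval A (env4 x c d y) (m (Suc i))) \<in> \<alpha>"
proof -
  have "(eval A (env4 x c d y) (m i), x) \<in> \<alpha>" "(eval A (env4 x c d y) (m (Suc i)), x) \<in> \<alpha>"
    using day_term_\<alpha>[OF day _ xy cd] i by simp_all
  then show ?thesis
    using congruence_sym[OF cong_\<alpha>] congruence_trans[OF cong_\<alpha>] by blast
qed

lemma day_terms_odd_link: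
  assumes day: "day_terms ar A N m" and i: "i < N" "odd i"
    and xy: "(x, y) \<in> \<alpha>" and cd: "(c, d) \<in> \<alpha> \<inter> \<gamma>"
  shows "(eval A (env4 x c d y) (m i), eval A (env4 x c d y) (m (Suc i))) \<in> \<alpha> \<inter> \<gamma>"
proof -
  have carr: "x \<in> carr A" "c \<in> carr A" "d \<in> carr A" "y \<in> carr A"
    using xy cd congruence_carr[OF cong_\<alpha>] by blast+
  have wf: "wf_trm ar (m i)" "wf_trm ar (m (Suc i))"
    using day_terms_wf[OF day] i by simp_all
  have \<gamma>: "(c, c) \<in> \<gamma>" "(d, c) \<in> \<gamma>" "(x, x) \<in> \<gamma>" "(y, y) \<in> \<gamma>"
    using carr cd congruence_refl[OF cong_\<gamma>] congruence_sym[OF cong_\<gamma>] by blast+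
  have "(eval A (env4 x c d y) (m i), eval A (env4 x c c y) (m i)) \<in> \<gamma>"
    using congruence_eval_env4[OF cong_\<gamma> wf(1)] \<gamma> by blast
  moreover have "(eval A (env4 x c c y) (m (Suc i)), eval A (env4 x c d y) (m (Suc i))) \<in> \<gamma>"
    using congruence_eval_env4[OF cong_\<gamma> wf(2)] \<gamma> cd by blast
  moreover have "eval A (env4 x c c y) (m i) = eval A (env4 x c c y) (m (Suc i))"
    using day_terms_eval(5)[OF day carr(1,2,2,4) i] .
  moreover have "(eval A (env4 x c d y) (m i), eval A (env4 x c d y) (m (Suc i))) \<in> \<alpha>"
    using day_terms_\<alpha>_link[OF day i(1) xy] cd by blast
  ultimately show ?thesis
    using congruence_trans[OF cong_\<gamma>] by auto
qed

lemma day_terms_first_link: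
  assumes day: "day_terms ar A N m" "1 \<le> N" and p: "odd p"
    and xy: "(x, y) \<in> \<alpha>" and cd: "(c, d) \<in> \<alpha>"
    and xc: "(x, c) \<in> \<beta>_chain p" and dw: "(d, w) \<in> \<beta>_chain p" and yw: "(y, w) \<in> \<beta>_chain p"
  shows "(x, eval A (env4 x c d y) (m 1)) \<in> \<alpha> \<inter> \<beta>_chain p"
proof -
  have p1: "1 \<le> p"
    using p by presburger
  have carr: "x \<in> carr A" "w \<in> carr A"
    using \<beta>_chain_carr[OF p1] xc dw by blast+
  have "(x, x) \<in> \<beta>_chain p"
    using congruence_refl[OF cong_\<beta> carr(1)] \<beta>_le_\<beta>_chain p1 by blast
  moreover have "(c, x) \<in> \<beta>_chain p"
    using xc by (subst \<beta>_chain_converse[OF p, symmetric]) simp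
  ultimately have "(eval A (env4 x c d y) (m 1), eval A (env4 x x w w) (m 1)) \<in> \<beta>_chain p"
    using preserves_env4[OF preserves_\<beta>_chain[OF p1 day_terms_wf[OF day(1)]]] day(2) dw yw by simp
  moreover have "eval A (env4 x x w w) (m 1) = x"
    using day_terms_eval(1)[OF day(1) carr(1,1,2,2)] day_terms_eval(4)[OF day(1) carr(1,1,2,2), of 0] day(2)
    by simp
  ultimately have "(x, eval A (env4 x c d y) (m 1)) \<in> \<beta>_chain p"
    by (subst \<beta>_chain_converse[OF p, symmetric]) simp
  moreover have "(eval A (env4 x c d y) (m 1), x) \<in> \<alpha>"
    using day_term_\<alpha>[OF day(1) day(2) xy cd] .
  ultimately show ?thesis
    using congruence_sym[OF cong_\<alpha>] by blast
qed

lemma day_terms_inclusion_3: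
  assumes day: "day_terms ar A n m"
  shows "\<alpha> \<inter> \<beta>_chain 3 \<subseteq> \<alpha>\<beta>_chain n"
proof (rule subrelI)
  fix x y assume "(x, y) \<in> \<alpha> \<inter> \<beta>_chain 3"
  then obtain c d where xy: "(x, y) \<in> \<alpha>" and xc: "(x, c) \<in> \<beta>" and cd: "(c, d) \<in> \<alpha> \<inter> \<gamma>"
    and dy: "(d, y) \<in> \<beta>"
    by (auto simp: numeral_3_eq_3)
  have carr: "x \<in> carr A" "c \<in> carr A" "d \<in> carr A" "y \<in> carr A"
    using xc dy congruence_carr[OF cong_\<beta>] by blast+
  define u where "u i = eval A (env4 x c d y) (m i)" for i
  have "(u i, u (Suc i)) \<in> (if even i then \<alpha> \<inter> \<beta> else \<alpha> \<inter> \<gamma>)" if i: "i < n" for i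
  proof (cases "even i")
    case True
    have "\<beta> O \<beta>\<inverse> = \<beta>"
      using congruence_equiv[OF cong_\<beta>] by (metis equiv_def equiv_relcomp_self sym_conv_converse_eq)
    moreover have "(x, x) \<in> \<beta>" "(c, x) \<in> \<beta>" "(y, y) \<in> \<beta>"
      using carr xc congruence_refl[OF cong_\<beta>] congruence_sym[OF cong_\<beta>] by blast+
    ultimately have "(u i, u (Suc i)) \<in> \<beta>"
      using day_terms_even_link[OF day i True, of \<beta> x x c d y y] dy carr day_terms_wf[OF day] i
      unfolding u_def by (simp add: congruence_preserves[OF cong_\<beta>])
    moreover have "(u i, u (Suc i)) \<in> \<alpha>"
      using day_terms_\<alpha>_link[OF day i xy] cd unfolding u_def by blast
    ultimately show ?thesis
      using True by simp
  next
    case False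
    then show ?thesis
      using day_terms_odd_link[OF day i False xy cd] unfolding u_def by simp
  qed
  moreover have "u 0 = x" "u n = y"
    unfolding u_def using day_terms_eval(1,2)[OF day carr] by simp_all
  ultimately show "(x, y) \<in> \<alpha>\<beta>_chain n"
    unfolding alt_comp_iff_chain by blast
qed

lemma inclusion_even_step:
  assumes "even n" "2 \<le> n" "\<alpha> \<inter> \<beta>_chain (n - 1) \<subseteq> \<alpha>\<beta>_chain (n - 1)"
  shows "\<alpha> \<inter> \<beta>_chain n \<subseteq> \<alpha>\<beta>_chain n"
proof (rule subrelI)
  fix x y assume xy: "(x, y) \<in> \<alpha> \<inter> \<beta>_chain n"
  have n: "n = Suc (n - 1)" "odd (n - 1)"
    using assms(1,2) by auto
  have snoc: "alt_comp X (\<alpha> \<inter> \<gamma>) n = alt_comp X (\<alpha> \<inter> \<gamma>) (n - 1) O (\<alpha> \<inter> \<gamma>)" for X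
    using alt_comp_snoc[of X "\<alpha> \<inter> \<gamma>" "n - 1"] n by simp
  then obtain c where xc: "(x, c) \<in> \<beta>_chain (n - 1)" and cy: "(c, y) \<in> \<alpha> \<inter> \<gamma>"
    using xy snoc by blast
  have "(x, c) \<in> \<alpha>"
    using xy cy congruence_sym[OF cong_\<alpha>] congruence_trans[OF cong_\<alpha>] by blast
  with xc assms(3) have "(x, c) \<in> \<alpha>\<beta>_chain (n - 1)"
    by blast
  with cy snoc show "(x, y) \<in> \<alpha>\<beta>_chain n"
    by blast
qed

lemma day3_left_half:
  assumes day: "day_terms ar A 3 m" and pr: "odd p" "odd r" "r \<le> p" "3 \<le> p"
    and xy: "(x, y) \<in> \<alpha>" and xc: "(x, c) \<in> \<beta>_chain p" and cw: "(c, w) \<in> \<alpha> \<inter> \<gamma>"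
    and wy: "(w, y) \<in> \<beta>_chain r"
  shows "(x, eval A (env4 x c c y) (m 1)) \<in> \<alpha> \<inter> \<beta>_chain p"
proof -
  have "(y, w) \<in> \<beta>_chain r"
    using wy by (subst \<beta>_chain_converse[OF pr(2), symmetric]) simp
  moreover have "1 \<le> r"
    using pr(2) by presburger
  ultimately have "(y, w) \<in> \<beta>_chain p"
    using \<beta>_chain_mono[of r p] pr(3) by blast
  moreover have "(c, w) \<in> \<beta>_chain p"
    using cw \<alpha>\<gamma>_le_\<beta>_chain[of p] pr(4) by auto
  moreover have "(c, c) \<in> \<alpha>"
    using cw congruence_carr[OF cong_\<alpha>] congruence_refl[OF cong_\<alpha>] by blast
  ultimately show ?thesis
    using day_terms_first_link[OF day _ pr(1) xy _ xc] by simp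
qed

lemma day3_right_half:
  assumes day: "day_terms ar A 3 m" and pr: "odd p" "odd r" "3 \<le> p" "p \<le> r + 2"
    and xy: "(x, y) \<in> \<alpha>" and xa: "(x, a) \<in> \<beta>" and ac: "(a, c) \<in> alt_comp (\<alpha> \<inter> \<gamma>) \<beta> (p - 1)"
    and cw: "(c, w) \<in> \<alpha> \<inter> \<gamma>" and wy: "(w, y) \<in> \<beta>_chain r"
  shows "(eval A (env4 x c c y) (m 2), y) \<in> \<alpha> \<inter> \<beta>_chain (r + 2)"
proof -
  have carr: "a \<in> carr A" "c \<in> carr A" "y \<in> carr A"
    using xa cw xy congruence_carr[OF cong_\<beta>] congruence_carr[OF cong_\<alpha>] by blast+
  have xa': "(x, a) \<in> \<beta>_chain (r + 2)" and yy: "(y, y) \<in> \<beta>_chain (r + 2)"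
    using xa congruence_refl[OF cong_\<beta> carr(3)] \<beta>_le_\<beta>_chain[of "r + 2"] by auto
  have ca: "(c, a) \<in> \<beta>_chain (r + 2)"
  proof -
    have "(c, a) \<in> \<beta>_chain (p - 1)"
      using ac \<alpha>\<gamma>_\<beta>_chain_converse[of "p - 1"] pr(1) by (auto simp: odd_pos)
    moreover have "1 \<le> p - 1" "p - 1 \<le> r + 2"
      using pr by auto
    ultimately show ?thesis
      using \<beta>_chain_mono[of "p - 1" "r + 2"] by blast
  qed
  have cy: "(c, y) \<in> \<beta>_chain (r + 2)"
  proof -
    have "(c, y) \<in> alt_comp (\<alpha> \<inter> \<gamma>) \<beta> (Suc r)"
      using cw wy by (auto simp: alt_comp_Suc)
    also have "\<dots> \<subseteq> \<beta>_chain (r + 2)"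
      using alt_comp_swap_le_Suc[OF congruence_equiv[OF cong_\<beta>] congruence_equiv[OF cong_\<alpha>\<gamma>], of r]
      by simp
    finally show ?thesis .
  qed
  have "preserves A (\<beta>_chain (r + 2)) (m 2)"
    by (rule preserves_\<beta>_chain) (simp_all add: day_terms_wf[OF day])
  then have "(eval A (env4 x c c y) (m 2), eval A (env4 a a y y) (m 2)) \<in> \<beta>_chain (r + 2)"
    using xa' ca cy yy by (rule preserves_env4)
  moreover have "eval A (env4 a a y y) (m 2) = y"
    using day_terms_eval(2)[OF day carr(1,1,3,3)] day_terms_eval(4)[OF day carr(1,1,3,3), of 2]
    by (simp add: numeral_3_eq_3)
  moreover have "(eval A (env4 x c c y) (m 2), y) \<in> \<alpha>"
    using day_term_\<alpha>[OF day _ xy congruence_refl[OF cong_\<alpha> carr(2)], of 2] xy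
      congruence_trans[OF cong_\<alpha>] by simp
  ultimately show ?thesis
    by simp
qed

lemma day3_inclusion_odd_step:
  assumes day: "day_terms ar A 3 m" and n: "odd n" "5 \<le> n"
    and IH: "\<And>k. k < n \<Longrightarrow> \<alpha> \<inter> \<beta>_chain k \<subseteq> \<alpha>\<beta>_chain k"
  shows "\<alpha> \<inter> \<beta>_chain n \<subseteq> \<alpha>\<beta>_chain n"
proof (rule subrelI)
  fix x y assume "(x, y) \<in> \<alpha> \<inter> \<beta>_chain n"
  then have xy: "(x, y) \<in> \<alpha>" and xy_chain: "(x, y) \<in> \<beta>_chain n"
    by auto
  \<comment> \<open>split at an odd position \<open>p\<close> near the middle: both new chains, with \<open>p\<close> and \<open>r + 2\<close>
    factors, are shorter than \<open>n\<close>\<close>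
  obtain p r where pr: "odd p" "odd r" "3 \<le> p" "r \<le> p" "p \<le> r + 2" and n_pr: "n = p + Suc r"
    using odd_split_balanced[OF n] .
  have "\<beta>_chain n = \<beta> O alt_comp (\<alpha> \<inter> \<gamma>) \<beta> (p - 1) O (\<alpha> \<inter> \<gamma>) O \<beta>_chain r"
    using alt_comp_add[of \<beta> "\<alpha> \<inter> \<gamma>" p "Suc r"] alt_comp_Suc[of \<beta> "\<alpha> \<inter> \<gamma>" "p - 1"] pr(1,3)
    unfolding n_pr by (simp add: alt_comp_Suc O_assoc)
  then obtain a c w where xa: "(x, a) \<in> \<beta>" and ac: "(a, c) \<in> alt_comp (\<alpha> \<inter> \<gamma>) \<beta> (p - 1)"
    and cw: "(c, w) \<in> \<alpha> \<inter> \<gamma>" and wy: "(w, y) \<in> \<beta>_chain r"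
    using xy_chain by blast
  have "(x, c) \<in> \<beta>_chain p"
    using xa ac alt_comp_Suc[of \<beta> "\<alpha> \<inter> \<gamma>" "p - 1"] pr(3) by auto
  then have "(x, eval A (env4 x c c y) (m 1)) \<in> \<alpha>\<beta>_chain p"
    using day3_left_half[OF day pr(1,2,4,3) xy _ cw wy] IH[of p] n_pr by auto
  moreover have "eval A (env4 x c c y) (m 1) = eval A (env4 x c c y) (m 2)"
  proof -
    have "x \<in> carr A" "c \<in> carr A" "y \<in> carr A"
      using xy cw congruence_carr[OF cong_\<alpha>] by blast+
    then show ?thesis
      using day_terms_eval(5)[OF day, of x c c y 1] by (simp add: numeral_2_eq_2)
  qed
  moreover have "(eval A (env4 x c c y) (m 2), y) \<in> \<alpha>\<beta>_chain (r + 2)"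
    using day3_right_half[OF day pr(1,2,3,5) xy xa ac cw wy] IH[of "r + 2"] pr(3) n_pr by auto
  moreover have "\<alpha>\<beta>_chain p O \<alpha>\<beta>_chain (r + 2) = \<alpha>\<beta>_chain n"
  proof -
    have idx: "Suc (p - 1) = p" "p - 1 + Suc (Suc r) = n"
      using pr(3) n_pr by auto
    show ?thesis
      using alt_comp_merge[of "\<alpha> \<inter> \<beta>" "p - 1" "\<alpha> \<inter> \<beta>" "\<alpha> \<inter> \<gamma>" "Suc r", unfolded idx] pr(1)
        equiv_relcomp_self[OF congruence_equiv[OF cong_\<alpha>\<beta>]] by simp
  qed
  ultimately show "(x, y) \<in> \<alpha>\<beta>_chain n"
    by auto
qed

lemma day3_inclusion:
  assumes day: "day_terms ar A 3 m"
  shows "\<alpha> \<inter> \<beta>_chain n \<subseteq> \<alpha>\<beta>_chain n"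
proof (induction n rule: less_induct)
  case (less n)
  consider "n = 0" | "n = 1" | "n = 3" | "even n" "2 \<le> n" | "odd n" "5 \<le> n"
    by atomize_elim presburger
  then show ?case
  proof cases
    case 3
    then show ?thesis
      using day_terms_inclusion_3[OF day] by simp
  next
    case 4
    then show ?thesis
      using inclusion_even_step less.IH by simp
  next
    case 5
    then show ?thesis
      using day3_inclusion_odd_step[OF day] less.IH by blast
  qed auto
qed

lemma \<beta>_chain_half:
  assumes "1 \<le> k"
  shows "\<beta>_chain (2 * k - 1) = \<beta>_chain k O (\<beta>_chain k)\<inverse>"
proof -
  have idx: "Suc (k - 1) = k" "k - 1 + k = 2 * k - 1"
    using assms by auto
  have "(\<beta>_chain k)\<inverse> = (if even (k - 1) then \<beta>_chain k else alt_comp (\<alpha> \<inter> \<gamma>) \<beta> k)"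
    using alt_comp_converse[of \<beta> "\<alpha> \<inter> \<gamma>" k] cong_\<beta> cong_\<alpha>\<gamma> assms
    by (auto simp: congruence_def equiv_def)
  moreover have "\<beta> O \<beta> = \<beta>" "(\<alpha> \<inter> \<gamma>) O (\<alpha> \<inter> \<gamma>) = \<alpha> \<inter> \<gamma>"
    using equiv_relcomp_self congruence_equiv cong_\<beta> cong_\<alpha>\<gamma> by blast+
  ultimately show ?thesis
    using alt_comp_merge[of _ "k - 1" \<beta> "\<alpha> \<inter> \<gamma>" "k - 1", unfolded idx] by (cases "even (k - 1)") auto
qed

lemma day4_chain:
  assumes day: "day_terms ar A 4 m" and n: "Suc n = 2 * k"
    and xy: "(x, y) \<in> \<alpha>" and xc: "(x, c) \<in> \<beta>_chain n" and cd: "(c, d) \<in> \<alpha> \<inter> \<gamma>"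
    and dy: "(d, y) \<in> \<beta>_chain n"
  defines "u \<equiv> \<lambda>i. eval A (env4 x c d y) (m i)"
  shows "(x, u 1) \<in> \<alpha> \<inter> \<beta>_chain n" and "(u 1, u 2) \<in> \<alpha> \<inter> \<gamma>"
    and "(u 2, u 3) \<in> \<alpha> \<inter> \<beta>_chain n" and "(u 3, y) \<in> \<alpha> \<inter> \<gamma>"
proof -
  have k: "1 \<le> k" and n_odd: "odd n" and n1: "1 \<le> n"
    using n by presburger+
  have "2 * k - 1 = n"
    using n by simp
  then have half: "\<beta>_chain n = \<beta>_chain k O (\<beta>_chain k)\<inverse>"
    using \<beta>_chain_half[OF k] by simp
  obtain a where xa: "(x, a) \<in> \<beta>_chain k" and ca: "(c, a) \<in> \<beta>_chain k"
    using xc unfolding half by auto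
  obtain w where dw: "(d, w) \<in> \<beta>_chain k" and yw: "(y, w) \<in> \<beta>_chain k"
    using dy unfolding half by auto
  have carr: "a \<in> carr A" "d \<in> carr A" "w \<in> carr A"
    using \<beta>_chain_carr[OF k xa] \<beta>_chain_carr[OF k dw] by simp_all
  have "(d, d) \<in> \<beta>_chain n"
    using congruence_refl[OF cong_\<beta> carr(2)] \<beta>_le_\<beta>_chain[OF n1] by blast
  moreover have "(y, d) \<in> \<beta>_chain n"
    using dy by (subst \<beta>_chain_converse[OF n_odd, symmetric]) simp
  ultimately show "(x, u 1) \<in> \<alpha> \<inter> \<beta>_chain n"
    unfolding u_def using day_terms_first_link[OF day _ n_odd xy _ xc] cd by simp
  show "(u 1, u 2) \<in> \<alpha> \<inter> \<gamma>"
    using day_terms_odd_link[OF day _ _ xy cd, of 1] unfolding u_def by (simp add: numeral_2_eq_2)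
  have "preserves A (\<beta>_chain k) (m 2)" "preserves A (\<beta>_chain k) (m (Suc 2))"
    using preserves_\<beta>_chain[OF k day_terms_wf[OF day]] by simp_all
  then have "(u 2, u 3) \<in> \<beta>_chain n"
    using day_terms_even_link[OF day _ _ _ _ xa ca dw yw carr(1,3), of 2]
    unfolding u_def half by (simp add: numeral_3_eq_3)
  moreover have "(u 2, u 3) \<in> \<alpha>"
    using day_terms_\<alpha>_link[OF day _ xy, of 2] cd unfolding u_def by (simp add: numeral_3_eq_3)
  ultimately show "(u 2, u 3) \<in> \<alpha> \<inter> \<beta>_chain n"
    by blast
  have "x \<in> carr A" "c \<in> carr A" "y \<in> carr A"
    using xy cd congruence_carr[OF cong_\<alpha>] by blast+
  then have "u 4 = y"
    using day_terms_eval(2)[OF day _ _ carr(2)] unfolding u_def by blast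
  then show "(u 3, y) \<in> \<alpha> \<inter> \<gamma>"
    using day_terms_odd_link[OF day _ _ xy cd, of 3] unfolding u_def by simp
qed

lemma day4_inclusion_double:
  assumes day: "day_terms ar A 4 m" and n: "Suc n = 2 * k"
    and IH: "\<alpha> \<inter> \<beta>_chain n \<subseteq> \<alpha>\<beta>_chain (Suc n)"
  shows "\<alpha> \<inter> \<beta>_chain (n + Suc n) \<subseteq> \<alpha>\<beta>_chain (Suc n + Suc n)"
proof (rule subrelI)
  have n_odd: "odd n"
    using n by presburger
  fix x y assume "(x, y) \<in> \<alpha> \<inter> \<beta>_chain (n + Suc n)"
  moreover have "\<beta>_chain (n + Suc n) = \<beta>_chain n O (\<alpha> \<inter> \<gamma>) O \<beta>_chain n"
    using alt_comp_add[of \<beta> "\<alpha> \<inter> \<gamma>" n "Suc n"] n_odd by (simp add: alt_comp_Suc)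
  ultimately obtain c d where xy: "(x, y) \<in> \<alpha>" and xc: "(x, c) \<in> \<beta>_chain n"
    and cd: "(c, d) \<in> \<alpha> \<inter> \<gamma>" and dy: "(d, y) \<in> \<beta>_chain n"
    by auto
  note links = day4_chain[OF day n xy xc cd dy]
  have "(x, eval A (env4 x c d y) (m 2)) \<in> \<alpha>\<beta>_chain (Suc n) O (\<alpha> \<inter> \<gamma>)"
    "(eval A (env4 x c d y) (m 2), y) \<in> \<alpha>\<beta>_chain (Suc n) O (\<alpha> \<inter> \<gamma>)"
    using links IH by blast+
  moreover have "\<alpha>\<beta>_chain (Suc n) O (\<alpha> \<inter> \<gamma>) = \<alpha>\<beta>_chain (Suc n)"
    using alt_comp_snoc[of "\<alpha> \<inter> \<beta>" "\<alpha> \<inter> \<gamma>" n] n_odd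
      equiv_relcomp_self[OF congruence_equiv[OF cong_\<alpha>\<gamma>]] by (simp add: O_assoc)
  moreover have "\<alpha>\<beta>_chain (Suc n) O \<alpha>\<beta>_chain (Suc n) = \<alpha>\<beta>_chain (Suc n + Suc n)"
    using alt_comp_add[of "\<alpha> \<inter> \<beta>" "\<alpha> \<inter> \<gamma>" "Suc n" "Suc n"] n_odd by simp
  ultimately show "(x, y) \<in> \<alpha>\<beta>_chain (Suc n + Suc n)"
    by auto
qed

lemma day4_inclusion:
  assumes day: "day_terms ar A 4 m" and q: "1 \<le> q"
  shows "\<alpha> \<inter> \<beta>_chain (2 ^ q - 1) \<subseteq> \<alpha>\<beta>_chain (2 ^ q)"
  using q
proof (induction q rule: nat_induct_at_least)
  case base
  have "(x, y) \<in> (\<alpha> \<inter> \<beta>) O (\<alpha> \<inter> \<gamma>)" if "(x, y) \<in> \<alpha> \<inter> \<beta>" for x y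
    using that congruence_carr[OF cong_\<alpha>, of x y] congruence_refl[OF cong_\<alpha>\<gamma>, of y] by blast
  then show ?case
    by (auto simp: numeral_2_eq_2)
next
  case (Suc q)
  define n :: nat where "n = 2 ^ q - 1"
  have n: "Suc n = 2 * 2 ^ (q - 1)" "Suc n = 2 ^ q"
    using Suc.hyps unfolding n_def by (cases q; simp)+
  have "\<alpha> \<inter> \<beta>_chain (n + Suc n) \<subseteq> \<alpha>\<beta>_chain (Suc n + Suc n)"
    using day4_inclusion_double[OF day n(1) Suc.IH[folded n_def n(2)]] .
  moreover have "n + Suc n = 2 ^ Suc q - 1" "Suc n + Suc n = 2 ^ Suc q"
    using n(2) by simp_all
  ultimately show ?case
    by (simp del: alt_comp.simps)
qed

end

lemma day_terms_3_imp_mk_modular: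
  assumes "day_terms ar A 3 m"
  shows "mk_modular_alg ar A n n"
  unfolding mk_modular_alg_def
proof (intro allI impI)
  fix \<alpha> \<beta> \<gamma> assume "congruence ar A \<alpha> \<and> congruence ar A \<beta> \<and> congruence ar A \<gamma>"
  then interpret three_congruences ar A \<alpha> \<beta> \<gamma>
    by unfold_locales auto
  show "\<alpha> \<inter> alt_comp \<beta> (\<alpha> \<inter> \<gamma>) n \<subseteq> alt_comp (\<alpha> \<inter> \<beta>) (\<alpha> \<inter> \<gamma>) n"
    using day3_inclusion[OF assms] .
qed

lemma day_terms_4_imp_mk_modular:
  assumes "day_terms ar A 4 m" and "1 \<le> q"
  shows "mk_modular_alg ar A (2 ^ q - 1) (2 ^ q)"
  unfolding mk_modular_alg_def
proof (intro allI impI)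
  fix \<alpha> \<beta> \<gamma> assume "congruence ar A \<alpha> \<and> congruence ar A \<beta> \<and> congruence ar A \<gamma>"
  then interpret three_congruences ar A \<alpha> \<beta> \<gamma>
    by unfold_locales auto
  show "\<alpha> \<inter> alt_comp \<beta> (\<alpha> \<inter> \<gamma>) (2 ^ q - 1) \<subseteq> alt_comp (\<alpha> \<inter> \<beta>) (\<alpha> \<inter> \<gamma>) (2 ^ q)"
    using day4_inclusion[OF assms] .
qed

section \<open>Free algebras\<close>

definition valid_eq :: "('f, 'a) alg set \<Rightarrow> ('f, 'v) trm \<Rightarrow> ('f, 'v) trm \<Rightarrow> bool" where
  "valid_eq K s t \<longleftrightarrow> (\<forall>A\<in>K. \<forall>\<rho>. (\<forall>v. \<rho> v \<in> carr A) \<longrightarrow> eval A \<rho> s = eval A \<rho> t)"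

lemma valid_eq_refl: "valid_eq K t t"
  by (simp add: valid_eq_def)

lemma valid_eq_sym: "valid_eq K s t \<Longrightarrow> valid_eq K t s"
  by (simp add: valid_eq_def)

lemma valid_eq_trans: "valid_eq K s t \<Longrightarrow> valid_eq K t u \<Longrightarrow> valid_eq K s u"
  by (simp add: valid_eq_def)

lemma valid_eq_Fun: "list_all2 (valid_eq K) ss ts \<Longrightarrow> valid_eq K (Fun f ss) (Fun f ts)"
  unfolding valid_eq_def by (auto simp: list_all2_conv_all_nth intro!: arg_cong[where f = "ops _ f"] nth_equalityI)

fun tsubst :: "('v \<Rightarrow> ('f, 'w) trm) \<Rightarrow> ('f, 'v) trm \<Rightarrow> ('f, 'w) trm" where
  "tsubst \<sigma> (Var v) = \<sigma> v"
| "tsubst \<sigma> (Fun f ts) = Fun f (map (tsubst \<sigma>) ts)"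

lemma wf_tsubst: "wf_trm ar t \<Longrightarrow> \<forall>v. wf_trm ar (\<sigma> v) \<Longrightarrow> wf_trm ar (tsubst \<sigma> t)"
  by (induction t) auto

lemma eval_tsubst: "eval A \<rho> (tsubst \<sigma> t) = eval A (\<lambda>v. eval A \<rho> (\<sigma> v)) t"
  by (induction t) (simp_all cong: map_cong)

lemma eval_closed:
  assumes "is_alg ar A" "\<forall>v. \<rho> v \<in> carr A" "wf_trm ar t"
  shows "eval A \<rho> t \<in> carr A"
  using assms(3)
proof (induction t)
  case (Fun f ts)
  then have "length (map (eval A \<rho>) ts) = ar f" "set (map (eval A \<rho>) ts) \<subseteq> carr A"
    by auto
  then show ?case
    using assms(1) unfolding is_alg_def by simp
qed (use assms(2) in simp)

lemma valid_eq_tsubst: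
  assumes "\<forall>A\<in>K. is_alg ar A" "\<forall>v. wf_trm ar (\<sigma> v)" "valid_eq K s t"
  shows "valid_eq K (tsubst \<sigma> s) (tsubst \<sigma> t)"
  using assms eval_closed unfolding valid_eq_def eval_tsubst by metis

text \<open>The free algebra of \<open>K\<close>: well-formed terms modulo the identities valid in \<open>K\<close>.
  The carrier must consist of terms, so each class is represented by a chosen member.\<close>

definition free_rep :: "('f \<Rightarrow> nat) \<Rightarrow> ('f, 'a) alg set \<Rightarrow> ('f, 'v) trm \<Rightarrow> ('f, 'v) trm" where
  "free_rep ar K t = (SOME s. wf_trm ar s \<and> valid_eq K s t)"

definition free_alg :: "('f \<Rightarrow> nat) \<Rightarrow> ('f, 'a) alg set \<Rightarrow> ('f, ('f, 'v) trm) alg" where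
  "free_alg ar K = \<lparr>carr = free_rep ar K ` {t. wf_trm ar t}, ops = (\<lambda>f ts. free_rep ar K (Fun f ts))\<rparr>"

lemma free_rep: "wf_trm ar t \<Longrightarrow> wf_trm ar (free_rep ar K t) \<and> valid_eq K (free_rep ar K t) t"
  unfolding free_rep_def by (rule someI[of _ t]) (simp add: valid_eq_refl)

lemma free_rep_eq: "valid_eq K s t \<Longrightarrow> free_rep ar K s = free_rep ar K t"
  unfolding free_rep_def by (metis valid_eq_sym valid_eq_trans)

lemma free_alg_carr_wf: "s \<in> carr (free_alg ar K) \<Longrightarrow> wf_trm ar s"
  unfolding free_alg_def using free_rep by fastforce

lemma free_rep_carr: "s \<in> carr (free_alg ar K) \<Longrightarrow> free_rep ar K s = s"
  unfolding free_alg_def using free_rep free_rep_eq by fastforce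

lemma free_rep_in_carr: "wf_trm ar t \<Longrightarrow> free_rep ar K t \<in> carr (free_alg ar K)"
  by (simp add: free_alg_def)

lemma is_alg_free_alg: "is_alg ar (free_alg ar K :: ('f, ('f, 'v) trm) alg)"
  unfolding is_alg_def
proof (intro conjI allI impI)
  show "carr (free_alg ar K) \<noteq> {}"
    using free_rep_in_carr[of ar "Var undefined" K] by auto
next
  fix f and xs :: "('f, 'v) trm list"
  assume "length xs = ar f \<and> set xs \<subseteq> carr (free_alg ar K)"
  then have "wf_trm ar (Fun f xs)"
    using free_alg_carr_wf by auto
  then show "ops (free_alg ar K) f xs \<in> carr (free_alg ar K)"
    using free_rep_in_carr by (simp add: free_alg_def)
qed

lemma eval_free_alg:
  assumes "wf_trm ar t" "\<forall>v. \<rho> v \<in> carr (free_alg ar K)"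
  shows "eval (free_alg ar K) \<rho> t = free_rep ar K (tsubst \<rho> t)"
  using assms(1)
proof (induction t)
  case (Var v)
  then show ?case
    using assms(2) free_rep_carr[of "\<rho> v" ar K] by simp
next
  case (Fun f ts)
  have wf_\<rho>: "\<forall>v. wf_trm ar (\<rho> v)"
    using assms(2) free_alg_carr_wf by blast
  have "valid_eq K (free_rep ar K (tsubst \<rho> t)) (tsubst \<rho> t)" if "t \<in> set ts" for t
    using free_rep[of ar "tsubst \<rho> t" K] wf_tsubst[OF _ wf_\<rho>] Fun.prems that by simp
  then have "list_all2 (valid_eq K) (map (\<lambda>t. free_rep ar K (tsubst \<rho> t)) ts) (map (tsubst \<rho>) ts)"
    by (simp add: list_all2_conv_all_nth)
  then show ?case
    using Fun by (simp add: free_alg_def free_rep_eq valid_eq_Fun cong: map_cong)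
qed

lemma free_alg_satisfies:
  assumes "\<forall>A\<in>K. is_alg ar A" "valid_eq K s t" "wf_trm ar s" "wf_trm ar t"
    and "\<forall>v. \<rho> v \<in> carr (free_alg ar K)"
  shows "eval (free_alg ar K) \<rho> s = eval (free_alg ar K) \<rho> t"
proof -
  have "\<forall>v. wf_trm ar (\<rho> v)"
    using assms(5) free_alg_carr_wf by blast
  then show ?thesis
    unfolding eval_free_alg[OF assms(3,5)] eval_free_alg[OF assms(4,5)]
    by (intro free_rep_eq valid_eq_tsubst[OF assms(1) _ assms(2)])
qed

lemma model_free_alg:
  fixes E :: "(('f, 'v) trm \<times> ('f, 'v) trm) set"
  assumes "identities ar E"
  shows "model ar E (free_alg ar {A :: ('f, 'a) alg. model ar E A} :: ('f, ('f, 'w) trm) alg)"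
proof -
  let ?K = "{A :: ('f, 'a) alg. model ar E A}"
  let ?F = "free_alg ar ?K :: ('f, ('f, 'w) trm) alg"
  have K: "\<forall>A\<in>?K. is_alg ar A"
    by (simp add: model_def)
  have "eval ?F \<rho> s = eval ?F \<rho> t" if "(s, t) \<in> E" "\<forall>v. \<rho> v \<in> carr ?F" for s t \<rho>
  proof (rule free_alg_satisfies[OF K _ _ _ that(2)])
    show "valid_eq ?K s t" "wf_trm ar s" "wf_trm ar t"
      using that(1) assms unfolding valid_eq_def model_def identities_def by auto
  qed
  then show ?thesis
    unfolding model_def using is_alg_free_alg by auto
qed

lemma eval_free_rep:
  "wf_trm ar t \<Longrightarrow> A \<in> K \<Longrightarrow> \<forall>v. \<rho> v \<in> carr A \<Longrightarrow> eval A \<rho> (free_rep ar K t) = eval A \<rho> t"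
  using free_rep[of ar t K] unfolding valid_eq_def by blast

text \<open>The kernel of the endomorphism of the free algebra induced by the substitution
  of variables \<open>v \<mapsto> g v\<close>.\<close>

definition subst_kernel :: "('f \<Rightarrow> nat) \<Rightarrow> ('f, 'a) alg set \<Rightarrow> ('v \<Rightarrow> 'v) \<Rightarrow> ('f, 'v) trm rel" where
  "subst_kernel ar K g = {(s, t). s \<in> carr (free_alg ar K) \<and> t \<in> carr (free_alg ar K) \<and>
     (\<forall>A\<in>K. \<forall>\<rho>. (\<forall>v. \<rho> v \<in> carr A) \<longrightarrow> eval A (\<rho> \<circ> g) s = eval A (\<rho> \<circ> g) t)}"

lemma congruence_subst_kernel: "congruence ar (free_alg ar K) (subst_kernel ar K g)"
  unfolding congruence_def
proof (intro conjI allI impI)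
  show "equiv (carr (free_alg ar K)) (subst_kernel ar K g)"
    by (rule equivI) (auto simp: subst_kernel_def refl_on_def sym_def trans_def)
next
  fix f xs ys
  assume "length xs = ar f \<and> length ys = ar f \<and> list_all2 (\<lambda>x y. (x, y) \<in> subst_kernel ar K g) xs ys"
  then have len: "length xs = ar f" "length ys = ar f"
    and xys: "list_all2 (\<lambda>x y. (x, y) \<in> subst_kernel ar K g) xs ys"
    by auto
  from xys have "set xs \<subseteq> carr (free_alg ar K) \<and> set ys \<subseteq> carr (free_alg ar K)"
    by (induction rule: list_all2_induct) (auto simp: subst_kernel_def)
  then have wf: "wf_trm ar (Fun f xs)" "wf_trm ar (Fun f ys)"
    using len free_alg_carr_wf[of _ ar K] by auto
  have "eval A (\<rho> \<circ> g) (free_rep ar K (Fun f xs)) = eval A (\<rho> \<circ> g) (free_rep ar K (Fun f ys))"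
    if "A \<in> K" "\<forall>v. \<rho> v \<in> carr A" for A \<rho>
  proof -
    from xys have "map (eval A (\<rho> \<circ> g)) xs = map (eval A (\<rho> \<circ> g)) ys"
      by (induction rule: list_all2_induct) (use that in \<open>auto simp: subst_kernel_def simp del: comp_apply\<close>)
    moreover have "\<forall>v. (\<rho> \<circ> g) v \<in> carr A"
      using that(2) by simp
    ultimately show ?thesis
      using eval_free_rep[OF wf(1) that(1)] eval_free_rep[OF wf(2) that(1)] by simp
  qed
  then show "(ops (free_alg ar K) f xs, ops (free_alg ar K) f ys) \<in> subst_kernel ar K g"
    using wf unfolding subst_kernel_def by (simp add: free_alg_def)
qed

lemma free_rep_Var_in_subst_kernel:
  "g i = g j \<Longrightarrow> (free_rep ar K (Var i), free_rep ar K (Var j)) \<in> subst_kernel ar K g"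
  unfolding subst_kernel_def by (simp add: free_rep_in_carr eval_free_rep)

lemma subst_kernel_env4:
  assumes "(s, t) \<in> subst_kernel ar K (env4 i j k l)" "A \<in> K" "\<forall>v. \<rho> v \<in> carr A"
  shows "eval A (env4 (\<rho> i) (\<rho> j) (\<rho> k) (\<rho> l)) s = eval A (env4 (\<rho> i) (\<rho> j) (\<rho> k) (\<rho> l)) t"
  using assms unfolding subst_kernel_def comp_env4[symmetric] by blast

lemma eval_free_rep_Var: "A \<in> K \<Longrightarrow> \<forall>v. \<rho> v \<in> carr A \<Longrightarrow> eval A \<rho> (free_rep ar K (Var j)) = \<rho> j"
  using eval_free_rep[of ar "Var j" A K \<rho>] by simp

section \<open>Day terms from congruence inclusions\<close>

text \<open>The three congruences identify the variables \<open>x, y, z, w\<close> as in the three kinds of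
  Day identities: \<open>(x, y, y, x)\<close>, \<open>(x, x, w, w)\<close> and \<open>(x, y, y, w)\<close>.\<close>

lemma day_terms_of_chain:
  fixes ar :: "'f \<Rightarrow> nat" and K :: "('f, 'a) alg set" and d :: "nat \<Rightarrow> ('f, nat) trm"
  defines "\<alpha> \<equiv> subst_kernel ar K (env4 0 1 1 0)" and "\<beta> \<equiv> subst_kernel ar K (env4 0 0 2 2)"
    and "\<gamma> \<equiv> subst_kernel ar K (env4 0 1 1 3)"
  assumes d0: "d 0 = free_rep ar K (Var 0)" and dn: "d n = free_rep ar K (Var 3)"
    and links: "\<forall>i<n. (d i, d (Suc i)) \<in> (if even i then \<alpha> \<inter> \<beta> else \<alpha> \<inter> \<gamma>)"
  shows "\<forall>A\<in>K. day_terms ar A n d"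
proof -
  have "\<forall>i<n. (d i, d (Suc i)) \<in> \<alpha>"
    using links by (auto split: if_splits)
  moreover have "d 0 \<in> carr (free_alg ar K)"
    unfolding d0 by (rule free_rep_in_carr) simp
  ultimately have to_d0: "(d i, d 0) \<in> \<alpha>" if "i \<le> n" for i
    using equiv_chain[OF congruence_equiv[OF congruence_subst_kernel]] that unfolding \<alpha>_def by blast
  then have carr: "d i \<in> carr (free_alg ar K)" if "i \<le> n" for i
    using that congruence_carr[OF congruence_subst_kernel] unfolding \<alpha>_def by blast
  show ?thesis
    unfolding day_terms_def
  proof (intro ballI conjI allI impI)
    fix A i assume A: "A \<in> K"
    show "i \<le> n \<Longrightarrow> wf_trm ar (d i)"
      using carr free_alg_carr_wf by blast
    fix a b c e assume abce: "a \<in> carr A" "b \<in> carr A" "c \<in> carr A" "e \<in> carr A"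
    then have \<rho>: "\<forall>v. env4 a b c e v \<in> carr A" and \<rho>': "\<forall>v. env4 a b b a v \<in> carr A"
      by (simp_all add: env4_def)
    show "eval A (env4 a b c e) (d 0) = a" "eval A (env4 a b c e) (d n) = e"
      unfolding d0 dn eval_free_rep_Var[OF A \<rho>] by (simp_all add: env4_def)
    show "eval A (env4 a b b a) (d i) = a" if "i \<le> n"
      using subst_kernel_env4[OF to_d0[OF that, unfolded \<alpha>_def] A \<rho>] eval_free_rep_Var[OF A \<rho>', where j = 0]
      unfolding d0 by (simp add: env4_def)
    show "if even i
          then eval A (env4 a a c c) (d i) = eval A (env4 a a c c) (d (Suc i))
          else eval A (env4 a b b e) (d i) = eval A (env4 a b b e) (d (Suc i))" if "i < n"
    proof (cases "even i")
      case True
      then have "(d i, d (Suc i)) \<in> subst_kernel ar K (env4 0 0 2 2)"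
        using links that unfolding \<beta>_def by auto
      from subst_kernel_env4[OF this A \<rho>] True show ?thesis
        by (simp add: env4_def)
    next
      case False
      then have "(d i, d (Suc i)) \<in> subst_kernel ar K (env4 0 1 1 3)"
        using links that unfolding \<gamma>_def by auto
      from subst_kernel_env4[OF this A \<rho>] False show ?thesis
        by (simp add: env4_def)
    qed
  qed
qed

lemma free_alg_day_terms:
  fixes K :: "('f, 'a) alg set"
  assumes "mk_modular_alg ar (free_alg ar K :: ('f, ('f, nat) trm) alg) 3 n"
  obtains m where "\<forall>A\<in>K. day_terms ar A n m"
proof -
  define \<alpha> where "\<alpha> = subst_kernel ar K (env4 0 1 1 0)"
  define \<beta> where "\<beta> = subst_kernel ar K (env4 0 0 2 2)"
  define \<gamma> where "\<gamma> = subst_kernel ar K (env4 0 1 1 3)"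
  let ?x = "\<lambda>i. free_rep ar K (Var i :: ('f, nat) trm)"
  have "(?x 0, ?x 1) \<in> \<beta>" "(?x 1, ?x 2) \<in> \<alpha> \<inter> \<gamma>" "(?x 2, ?x 3) \<in> \<beta>" "(?x 0, ?x 3) \<in> \<alpha>"
    unfolding \<alpha>_def \<beta>_def \<gamma>_def by (auto intro: free_rep_Var_in_subst_kernel simp: env4_def)
  then have "(?x 0, ?x 3) \<in> \<alpha> \<inter> alt_comp \<beta> (\<alpha> \<inter> \<gamma>) 3"
    by (auto simp: numeral_3_eq_3)
  then have "(?x 0, ?x 3) \<in> alt_comp (\<alpha> \<inter> \<beta>) (\<alpha> \<inter> \<gamma>) n"
    using assms congruence_subst_kernel unfolding mk_modular_alg_def \<alpha>_def \<beta>_def \<gamma>_def by blast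
  then obtain d where "d 0 = ?x 0" "d n = ?x 3"
    "\<forall>i<n. (d i, d (Suc i)) \<in> (if even i then \<alpha> \<inter> \<beta> else \<alpha> \<inter> \<gamma>)"
    unfolding alt_comp_iff_chain by blast
  then show thesis
    using that day_terms_of_chain unfolding \<alpha>_def \<beta>_def \<gamma>_def by blast
qed

theorem proposition3p5:
  fixes ar :: "'f \<Rightarrow> nat"
    and E :: "(('f, nat) trm \<times> ('f, nat) trm) set"
  assumes "identities ar E"
  shows "((\<forall>A :: ('f, ('f, nat) trm) alg. model ar E A \<longrightarrow> mk_modular_alg ar A 3 3)
            \<longrightarrow> (\<forall>m\<ge>3. \<forall>A :: ('f, 'a) alg. model ar E A \<longrightarrow> mk_modular_alg ar A m m))
       \<and> ((\<forall>A :: ('f, ('f, nat) trm) alg. model ar E A \<longrightarrow> mk_modular_alg ar A 3 4)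
            \<longrightarrow> (\<forall>q\<ge>2. \<forall>A :: ('f, 'a) alg. model ar E A \<longrightarrow> mk_modular_alg ar A (2^q - 1) (2^q)))"
proof -
  let ?K = "{A :: ('f, 'a) alg. model ar E A}"
  have "model ar E (free_alg ar ?K :: ('f, ('f, nat) trm) alg)"
    using model_free_alg[OF assms] .
  then have day: "\<exists>m. \<forall>A\<in>?K. day_terms ar A n m"
    if "\<forall>A :: ('f, ('f, nat) trm) alg. model ar E A \<longrightarrow> mk_modular_alg ar A 3 n" for n
    using that free_alg_day_terms[of ar ?K n] by blast
  have "mk_modular_alg ar A k k"
    if "\<forall>A :: ('f, ('f, nat) trm) alg. model ar E A \<longrightarrow> mk_modular_alg ar A 3 3" and "A \<in> ?K" for A k
    using day[OF that(1)] that(2) day_terms_3_imp_mk_modular by blast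
  moreover have "mk_modular_alg ar A (2 ^ q - 1) (2 ^ q)"
    if "\<forall>A :: ('f, ('f, nat) trm) alg. model ar E A \<longrightarrow> mk_modular_alg ar A 3 4" and "A \<in> ?K" "1 \<le> q"
    for A q
    using day[OF that(1)] that(2,3) day_terms_4_imp_mk_modular by blast
  ultimately show ?thesis
    by auto
qed

end
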